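(* Let $G,\Omega\in\{\mathbb{D},\mathbb{H}\}$, where $\mathbb{D}=\{z\in\mathbb{C}:|z|<1\}$ and $\mathbb{H}=\{z\in\mathbb{C}:\operatorname{Im}z>0\}$, let $f:G\to\Omega$ be a Möbius transformation of $G$ onto $\Omega$, and let $1\le p\le\infty$. Then $f:(G,b_{G,p})\to(\Omega,b_{\Omega,p})$ is $L$-Lipschitz, i.e. $b_{\Omega,p}(f(z_1),f(z_2))\le L\,b_{G,p}(z_1,z_2)$ for all $z_1,z_2\in G$, with $L=2^{2-1/p}$ if $G=\mathbb{D}$ and $L=2^{1-1/p}$ if $G=\mathbb{H}$ (with $1/p=0$ when $p=\infty$).
   Context: For a domain $G\subsetneq\mathbb{C}$, $z_1,z_2\in G$ and $1\le p<\infty$, $b_{G,p}(z_1,z_2)=\sup_{z\in\partial G}\frac{|z_1-z_2|}{\sqrt[p]{|z_1-z|^p+|z-z_2|^p}}$, and $b_{G,\infty}(z_1,z_2)=\sup_{z\in\partial G}\frac{|z_1-z_2|}{\max\{|z_1-z|,|z_2-z|\}}$. *)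

theory Defs
  imports "HOL-Analysis.Analysis" "HOL-Library.Extended_Real"
begin

definition unit_disc :: "complex set" where
  "unit_disc = ball 0 1"

definition upper_half_plane :: "complex set" where
  "upper_half_plane = {z. Im z > 0}"

definition b_fun :: "complex set \<Rightarrow> ereal \<Rightarrow> complex \<Rightarrow> complex \<Rightarrow> real" where
  "b_fun G p z1 z2 =
     (SUP z \<in> frontier G.
        (if p = \<infinity> then cmod (z1 - z2) / max (cmod (z1 - z)) (cmod (z2 - z))
         else cmod (z1 - z2) /
              ((cmod (z1 - z) powr real_of_ereal p + cmod (z - z2) powr real_of_ereal p)
                 powr (1 / real_of_ereal p))))"

definition mobius_onto :: "(complex \<Rightarrow> complex) \<Rightarrow> complex set \<Rightarrow> complex set \<Rightarrow> bool" where
  "mobius_onto f G \<Omega> \<longleftrightarrow>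
     (\<exists>a b c d. a * d - b * c \<noteq> 0 \<and> (\<forall>z\<in>G. c * z + d \<noteq> 0 \<and> f z = (a * z + b) / (c * z + d)))
     \<and> f ` G = \<Omega>"

end

theory Submission
  imports Defs "HOL-Complex_Analysis.Riemann_Mapping"
begin

text \<open>Both domains carry the pseudo-hyperbolic distance \<rho>, which is |z - w| / |1 - cnj w z|
  on the disc and |z - w| / |z - cnj w| on the half-plane, and holomorphic maps between them
  do not increase \<rho> (Schwarz-Pick, transported by the Cayley map). The p-norm of a pair (a, b)
  lies between 2 powr (1/p - 1) (a + b) and a + b, so b_{G,p}(z1, z2) lies between the supremum
  of |z1 - z2| / (|z1 - z| + |z - z2|) over boundary points z and 2 powr (1 - 1/p) times it.
  The triangle inequality through the reflection of z2 bounds this supremum above by \<rho>.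
  Conversely a well-chosen boundary point (the radial projection of the point of larger modulus,
  resp. the point where the segment from z1 to cnj z2 meets the real axis) bounds it below by
  \<rho>/2 on the disc and by \<rho> on the half-plane.\<close>

section \<open>The p-norm of a pair of numbers\<close>

lemma real_of_ereal_one_over: "real_of_ereal (1 / ereal q) = 1 / q"
  by (cases "q = 0") (auto simp: one_ereal_def divide_ereal_def inverse_eq_divide)

lemma powr_add_le_add_powr:
  fixes a b q :: real
  assumes "1 \<le> q" "0 \<le> a" "0 \<le> b"
  shows "a powr q + b powr q \<le> (a + b) powr q"
proof -
  have split: "x powr q = x * x powr (q - 1)" if "0 \<le> x" for x :: real
    using that powr_add[of x 1 "q - 1"] by simp
  have "a powr q + b powr q \<le> a * (a + b) powr (q - 1) + b * (a + b) powr (q - 1)"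
    using assms by (auto simp: split intro!: add_mono mult_left_mono powr_mono2)
  also have "\<dots> = (a + b) powr q"
    using assms by (simp add: split distrib_right)
  finally show ?thesis .
qed

lemma powr_root_sum_le_add:
  fixes a b q :: real
  assumes "1 \<le> q" "0 \<le> a" "0 \<le> b"
  shows "(a powr q + b powr q) powr (1 / q) \<le> a + b"
proof -
  have "(a powr q + b powr q) powr (1 / q) \<le> ((a + b) powr q) powr (1 / q)"
    using assms by (intro powr_mono2 powr_add_le_add_powr) auto
  also have "\<dots> = a + b"
    using assms by (simp add: powr_powr)
  finally show ?thesis .
qed

lemma add_le_powr_root_sum:
  fixes a b q :: real
  assumes "1 \<le> q" "0 \<le> a" "0 \<le> b"
  shows "a + b \<le> 2 powr (1 - 1 / q) * (a powr q + b powr q) powr (1 / q)"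
proof (cases "a = 0 \<or> b = 0")
  case True
  have "1 \<le> 2 powr (1 - 1 / q)"
    using assms by (intro ge_one_powr_ge_zero) auto
  then have "a + b \<le> 2 powr (1 - 1 / q) * (a + b)"
    using assms by (simp add: mult_le_cancel_right1)
  with True show ?thesis
    using assms by (auto simp: powr_powr)
next
  case False
  with assms have mean: "((a + b) / 2) powr q \<le> (a powr q + b powr q) / 2"
    using convex_onD[OF powr_convex[OF assms(1)], of "1/2" a b]
    by (simp add: field_simps)
  have "(a + b) / 2 \<le> ((a powr q + b powr q) / 2) powr (1 / q)"
    using powr_mono2[of "1 / q", OF _ _ mean] assms by (simp add: powr_powr)
  also have "\<dots> = 2 powr (1 - 1 / q) * (a powr q + b powr q) powr (1 / q) / 2"
    by (simp add: powr_divide powr_diff)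
  finally show ?thesis
    by simp
qed

definition pnorm_pair :: "ereal \<Rightarrow> real \<Rightarrow> real \<Rightarrow> real" where
  "pnorm_pair p a b =
     (if p = \<infinity> then max a b
      else (a powr real_of_ereal p + b powr real_of_ereal p) powr (1 / real_of_ereal p))"

lemma pnorm_pair_nonneg: "0 \<le> a \<Longrightarrow> 0 \<le> pnorm_pair p a b"
  by (auto simp: pnorm_pair_def le_max_iff_disj)

lemma pnorm_pair_le_add:
  assumes "1 \<le> p" "0 \<le> a" "0 \<le> b"
  shows "pnorm_pair p a b \<le> a + b"
  using assms powr_root_sum_le_add[of "real_of_ereal p" a b]
  by (cases p) (auto simp: pnorm_pair_def)

lemma add_le_pnorm_pair:
  assumes "1 \<le> p" "0 \<le> a" "0 \<le> b"
  shows "a + b \<le> 2 powr (1 - real_of_ereal (1 / p)) * pnorm_pair p a b"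
  using assms add_le_powr_root_sum[of "real_of_ereal p" a b]
  by (cases p) (auto simp: pnorm_pair_def real_of_ereal_one_over)

lemma triangle_ratio_le_pnorm_ratio:
  fixes a b d :: real
  assumes "1 \<le> p" "0 \<le> a" "0 \<le> b" "0 \<le> d" "d \<le> a + b"
  shows "d / (a + b) \<le> d / pnorm_pair p a b"
    and "d / pnorm_pair p a b \<le> 2 powr (1 - real_of_ereal (1 / p)) * (d / (a + b))"
proof -
  define N where "N = pnorm_pair p a b"
  define c where "c = 2 powr (1 - real_of_ereal (1 / p))"
  have N: "0 \<le> N" "N \<le> a + b" "a + b \<le> c * N"
    using assms pnorm_pair_nonneg pnorm_pair_le_add add_le_pnorm_pair
    unfolding N_def c_def by blast+
  have "d / (a + b) \<le> d / N \<and> d / N \<le> c * (d / (a + b))"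
  proof (cases "N = 0")
    case True
    then have "a + b = 0" "d = 0"
      using N assms by auto
    then show ?thesis by simp
  next
    case False
    then have "0 < N" "0 < a + b" using N by linarith+
    moreover have "d * (a + b) \<le> d * (c * N)"
      using N assms by (intro mult_left_mono) auto
    ultimately have "d / N \<le> c * (d / (a + b))"
      by (simp add: field_simps)
    moreover have "d / (a + b) \<le> d / N"
      using N \<open>0 < N\<close> assms by (intro divide_left_mono) auto
    ultimately show ?thesis by simp
  qed
  then show "d / (a + b) \<le> d / pnorm_pair p a b"
    and "d / pnorm_pair p a b \<le> 2 powr (1 - real_of_ereal (1 / p)) * (d / (a + b))"
    by (simp_all add: N_def c_def)
qed

section \<open>Bounds for b_{G,p} by boundary points\<close>

lemma b_fun_pnorm_pair:
  "b_fun G p z1 z2 =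
     (SUP z\<in>frontier G. cmod (z1 - z2) / pnorm_pair p (cmod (z1 - z)) (cmod (z - z2)))"
  unfolding b_fun_def pnorm_pair_def by (intro SUP_cong) (auto simp: norm_minus_commute)

lemma triangle_ratio_le_one: "cmod (z1 - z2) / (cmod (z1 - z) + cmod (z - z2)) \<le> 1"
proof -
  have "cmod (z1 - z2) \<le> cmod (z1 - z) + cmod (z - z2)"
    using dist_triangle[of z1 z2 z] by (simp add: dist_norm)
  moreover have "0 \<le> cmod (z1 - z) + cmod (z - z2)"
    by simp
  ultimately show ?thesis
    by (smt (verit) divide_le_eq_1)
qed

lemma triangle_ratio_le_b_fun:
  assumes "1 \<le> p" "z \<in> frontier G"
  shows "cmod (z1 - z2) / (cmod (z1 - z) + cmod (z - z2)) \<le> b_fun G p z1 z2"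
proof -
  let ?c = "2 powr (1 - real_of_ereal (1 / p))"
  let ?term = "\<lambda>z. cmod (z1 - z2) / pnorm_pair p (cmod (z1 - z)) (cmod (z - z2))"
  have term_bounds: "cmod (z1 - z2) / (cmod (z1 - z) + cmod (z - z2)) \<le> ?term z"
    "?term z \<le> ?c * (cmod (z1 - z2) / (cmod (z1 - z) + cmod (z - z2)))" for z
    using triangle_ratio_le_pnorm_ratio[OF assms(1)] dist_triangle[of z1 z2 z]
    by (simp_all add: dist_norm)
  have "?term z \<le> ?c" for z
    using term_bounds(2)[of z] triangle_ratio_le_one[of z1 z2 z]
    by (smt (verit, best) mult_left_le powr_ge_zero)
  then have "bdd_above (?term ` frontier G)"
    by (intro bdd_aboveI2)
  then show ?thesis
    unfolding b_fun_pnorm_pair by (rule cSUP_upper2[OF _ assms(2) term_bounds(1)])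
qed

lemma b_fun_le_triangle_bound:
  assumes "1 \<le> p" "frontier G \<noteq> {}" "0 < A"
    and "\<And>z. z \<in> frontier G \<Longrightarrow> A \<le> cmod (z1 - z) + cmod (z - z2)"
  shows "b_fun G p z1 z2 \<le> 2 powr (1 - real_of_ereal (1 / p)) * (cmod (z1 - z2) / A)"
  unfolding b_fun_pnorm_pair
proof (rule cSUP_least[OF assms(2)])
  fix z assume "z \<in> frontier G"
  then have "A \<le> cmod (z1 - z) + cmod (z - z2)"
    by (rule assms(4))
  then have "cmod (z1 - z2) / (cmod (z1 - z) + cmod (z - z2)) \<le> cmod (z1 - z2) / A"
    using assms(3) by (intro divide_left_mono) (auto simp: zero_less_mult_iff)
  then show "cmod (z1 - z2) / pnorm_pair p (cmod (z1 - z)) (cmod (z - z2))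
      \<le> 2 powr (1 - real_of_ereal (1 / p)) * (cmod (z1 - z2) / A)"
    using triangle_ratio_le_pnorm_ratio(2)[OF assms(1), of "cmod (z1 - z)" "cmod (z - z2)"]
      dist_triangle[of z1 z2 z]
    by (smt (verit) dist_norm mult_left_mono norm_ge_zero powr_ge_zero)
qed

section \<open>The pseudo-hyperbolic distance\<close>

definition pseudo_hyp_disc :: "complex \<Rightarrow> complex \<Rightarrow> real" where
  "pseudo_hyp_disc z w = cmod (Moebius_function 0 w z)"

lemma pseudo_hyp_disc_eq: "pseudo_hyp_disc z w = cmod (z - w) / cmod (1 - cnj w * z)"
  by (simp add: pseudo_hyp_disc_def Moebius_function_simple norm_divide)

lemma Schwarz_Pick:
  assumes holg: "g holomorphic_on ball 0 1"
    and g: "\<And>z. z \<in> ball 0 1 \<Longrightarrow> g z \<in> ball 0 1"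
    and z: "z \<in> ball 0 1" and w: "w \<in> ball 0 1"
  shows "pseudo_hyp_disc (g z) (g w) \<le> pseudo_hyp_disc z w"
proof -
  have nw: "norm w < 1" and ngw: "norm (g w) < 1"
    using w g[OF w] by auto
  have into_disc: "Moebius_function 0 (-w) ` ball 0 1 \<subseteq> ball 0 1"
    using Moebius_function_norm_lt_1[of "-w"] nw by auto
  define h where "h = Moebius_function 0 (g w) \<circ> (g \<circ> Moebius_function 0 (-w))"
  have "(g \<circ> Moebius_function 0 (-w)) holomorphic_on ball 0 1"
    using nw
    by (intro holomorphic_on_compose_gen[OF Moebius_function_holomorphic holg into_disc]) auto
  moreover have "(g \<circ> Moebius_function 0 (-w)) ` ball 0 1 \<subseteq> ball 0 1"
    using g into_disc by auto
  ultimately have holh: "h holomorphic_on ball 0 1"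
    unfolding h_def using ngw
    by (intro holomorphic_on_compose_gen[OF _ Moebius_function_holomorphic]) auto
  have h0: "h 0 = 0"
    by (simp add: h_def Moebius_function_of_zero Moebius_function_eq_zero)
  have h_disc: "norm (h \<zeta>) < 1" if "norm \<zeta> < 1" for \<zeta>
  proof -
    have "Moebius_function 0 (-w) \<zeta> \<in> ball 0 1"
      using Moebius_function_norm_lt_1[of "-w" \<zeta> 0] nw that by auto
    then show ?thesis
      unfolding h_def using g ngw by (auto intro!: Moebius_function_norm_lt_1)
  qed
  define \<xi> where "\<xi> = Moebius_function 0 w z"
  have "norm \<xi> < 1"
    unfolding \<xi>_def using nw z by (auto intro!: Moebius_function_norm_lt_1)
  then have "norm (h \<xi>) \<le> norm \<xi>"
    using Schwarz_Lemma(1)[OF holh h0 h_disc] by blast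
  moreover have "Moebius_function 0 (-w) \<xi> = z"
    unfolding \<xi>_def using nw z by (intro Moebius_function_compose) auto
  ultimately show ?thesis
    by (simp add: h_def pseudo_hyp_disc_def \<xi>_def)
qed

definition cayley :: "complex \<Rightarrow> complex" where
  "cayley z = (z - \<i>) / (z + \<i>)"

definition cayley_inv :: "complex \<Rightarrow> complex" where
  "cayley_inv w = \<i> * (1 + w) / (1 - w)"

lemma cayley_in_disc:
  assumes "Im z > 0"
  shows "cayley z \<in> ball 0 1"
proof -
  have "(cmod (z - \<i>))\<^sup>2 = (Re z)\<^sup>2 + (Im z - 1)\<^sup>2"
    and "(cmod (z + \<i>))\<^sup>2 = (Re z)\<^sup>2 + (Im z + 1)\<^sup>2"
    by (simp_all add: cmod_power2)
  then have "(cmod (z - \<i>))\<^sup>2 < (cmod (z + \<i>))\<^sup>2"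
    using assms by (simp add: power2_eq_square algebra_simps)
  then have "cmod (z - \<i>) < cmod (z + \<i>)"
    by (meson norm_ge_zero power_less_imp_less_base)
  then show ?thesis
    by (simp add: cayley_def norm_divide divide_less_eq)
qed

lemma Im_cayley_inv_pos:
  assumes "w \<in> ball 0 1"
  shows "Im (cayley_inv w) > 0"
proof -
  have "Im (cayley_inv w) = Re ((1 + w) * cnj (1 - w)) / (cmod (1 - w))\<^sup>2"
    by (simp add: cayley_inv_def Im_divide cmod_power2 algebra_simps)
  also have "Re ((1 + w) * cnj (1 - w)) = 1 - (cmod w)\<^sup>2"
    unfolding cmod_power2 by (simp add: algebra_simps power2_eq_square)
  finally have "Im (cayley_inv w) = (1 - (cmod w)\<^sup>2) / (cmod (1 - w))\<^sup>2" .
  moreover have "(cmod w)\<^sup>2 < 1" "w \<noteq> 1"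
    using assms by (auto simp: abs_square_less_1)
  ultimately show ?thesis
    by simp
qed

lemma cayley_inv_cayley:
  assumes "Im z > 0"
  shows "cayley_inv (cayley z) = z"
proof -
  have nz: "z + \<i> \<noteq> 0"
    using assms by (auto simp: complex_eq_iff)
  have "1 - cayley z = 2 * \<i> / (z + \<i>)" and "1 + cayley z = z * (2 / (z + \<i>))"
    using nz by (simp_all add: cayley_def field_simps)
  then show ?thesis
    using nz by (simp add: cayley_inv_def)
qed

lemma pseudo_hyp_disc_cayley:
  assumes "Im z > 0" "Im w > 0"
  shows "pseudo_hyp_disc (cayley z) (cayley w) = cmod (z - w) / cmod (z - cnj w)"
proof -
  have nz: "z + \<i> \<noteq> 0" and nw: "w + \<i> \<noteq> 0" and nw': "cnj w - \<i> \<noteq> 0"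
    using assms by (auto simp: complex_eq_iff)
  have diff: "cayley z - cayley w = 2 * \<i> * (z - w) / ((z + \<i>) * (w + \<i>))"
    using nz nw by (simp add: cayley_def field_simps)
  have "cnj (cayley w) * cayley z = ((cnj w + \<i>) * (z - \<i>)) / ((cnj w - \<i>) * (z + \<i>))"
    by (simp add: cayley_def)
  moreover have "(cnj w - \<i>) * (z + \<i>) - (cnj w + \<i>) * (z - \<i>) = -2 * \<i> * (z - cnj w)"
    by (simp add: algebra_simps)
  ultimately have denom:
    "1 - cnj (cayley w) * cayley z = -2 * \<i> * (z - cnj w) / ((cnj w - \<i>) * (z + \<i>))"
    using nz nw' by (metis diff_divide_distrib div_self mult_eq_0_iff)
  have norm_cnj: "cmod (cnj w - \<i>) = cmod (w + \<i>)"
    by (metis complex_cnj_add complex_cnj_i complex_mod_cnj diff_conv_add_uminus)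
  define P where "P = cmod (z + \<i>) * cmod (w + \<i>)"
  have "P > 0"
    using nz nw by (simp add: P_def)
  have num_norm: "cmod (cayley z - cayley w) = 2 * cmod (z - w) / P"
    unfolding diff P_def by (simp add: norm_divide norm_mult)
  have denom_norm: "cmod (1 - cnj (cayley w) * cayley z) = 2 * cmod (z - cnj w) / P"
    unfolding denom P_def using norm_cnj by (simp add: norm_divide norm_mult mult.commute)
  show ?thesis
    unfolding pseudo_hyp_disc_eq num_norm denom_norm
    using \<open>P > 0\<close> by (simp add: field_simps)
qed

lemma unit_disc_neq_upper_half_plane: "unit_disc \<noteq> upper_half_plane"
proof -
  have "0 \<in> unit_disc" "0 \<notin> upper_half_plane"
    by (simp_all add: unit_disc_def upper_half_plane_def)
  then show ?thesis by blast
qed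

definition to_disc :: "complex set \<Rightarrow> complex \<Rightarrow> complex" where
  "to_disc G = (if G = unit_disc then id else cayley)"

definition from_disc :: "complex set \<Rightarrow> complex \<Rightarrow> complex" where
  "from_disc G = (if G = unit_disc then id else cayley_inv)"

definition pseudo_hyp :: "complex set \<Rightarrow> complex \<Rightarrow> complex \<Rightarrow> real" where
  "pseudo_hyp G z w = pseudo_hyp_disc (to_disc G z) (to_disc G w)"

lemma disc_chart:
  assumes "G \<in> {unit_disc, upper_half_plane}"
  shows "from_disc G holomorphic_on ball 0 1" "from_disc G ` ball 0 1 \<subseteq> G"
    and "to_disc G holomorphic_on G" "to_disc G ` G \<subseteq> ball 0 1"
    and "\<And>z. z \<in> G \<Longrightarrow> from_disc G (to_disc G z) = z"
proof -
  have "cayley holomorphic_on upper_half_plane"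
    unfolding cayley_def upper_half_plane_def
    by (intro holomorphic_intros) (auto simp: complex_eq_iff)
  moreover have "cayley_inv holomorphic_on ball 0 1"
    unfolding cayley_inv_def by (intro holomorphic_intros) auto
  ultimately show "from_disc G holomorphic_on ball 0 1" "from_disc G ` ball 0 1 \<subseteq> G"
    and "to_disc G holomorphic_on G" "to_disc G ` G \<subseteq> ball 0 1"
    and "\<And>z. z \<in> G \<Longrightarrow> from_disc G (to_disc G z) = z"
    using assms unit_disc_neq_upper_half_plane cayley_in_disc Im_cayley_inv_pos cayley_inv_cayley
    by (auto simp: to_disc_def from_disc_def) (auto simp: unit_disc_def upper_half_plane_def)
qed

lemma pseudo_hyp_holomorphic_le:
  assumes G: "G \<in> {unit_disc, upper_half_plane}"
    and \<Omega>: "\<Omega> \<in> {unit_disc, upper_half_plane}"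
    and holf: "f holomorphic_on G" and f: "f ` G \<subseteq> \<Omega>"
    and z: "z \<in> G" and w: "w \<in> G"
  shows "pseudo_hyp \<Omega> (f z) (f w) \<le> pseudo_hyp G z w"
proof -
  note chart_G = disc_chart[OF G] and chart_\<Omega> = disc_chart[OF \<Omega>]
  define g where "g = to_disc \<Omega> \<circ> (f \<circ> from_disc G)"
  have "(f \<circ> from_disc G) holomorphic_on ball 0 1"
    by (rule holomorphic_on_compose_gen[OF chart_G(1) holf chart_G(2)])
  moreover have f_from_disc: "(f \<circ> from_disc G) ` ball 0 1 \<subseteq> \<Omega>"
    using chart_G(2) f by auto
  ultimately have "g holomorphic_on ball 0 1"
    unfolding g_def by (rule holomorphic_on_compose_gen[OF _ chart_\<Omega>(3)])
  moreover have "g \<zeta> \<in> ball 0 1" if "\<zeta> \<in> ball 0 1" for \<zeta>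
  proof -
    have "(f \<circ> from_disc G) \<zeta> \<in> \<Omega>"
      using that f_from_disc by blast
    then show ?thesis
      using chart_\<Omega>(4) unfolding g_def by auto
  qed
  moreover have "to_disc G z \<in> ball 0 1" "to_disc G w \<in> ball 0 1"
    using chart_G(4) z w by auto
  ultimately have "pseudo_hyp_disc (g (to_disc G z)) (g (to_disc G w))
      \<le> pseudo_hyp_disc (to_disc G z) (to_disc G w)"
    by (rule Schwarz_Pick)
  then show ?thesis
    using chart_G(5) z w by (simp add: pseudo_hyp_def g_def)
qed

lemma pseudo_hyp_unit_disc:
  "pseudo_hyp unit_disc z w = cmod (z - w) / cmod (1 - cnj w * z)"
  by (simp add: pseudo_hyp_def to_disc_def pseudo_hyp_disc_eq)

lemma pseudo_hyp_upper_half_plane: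
  "z \<in> upper_half_plane \<Longrightarrow> w \<in> upper_half_plane \<Longrightarrow>
    pseudo_hyp upper_half_plane z w = cmod (z - w) / cmod (z - cnj w)"
  using unit_disc_neq_upper_half_plane
  by (simp add: pseudo_hyp_def to_disc_def pseudo_hyp_disc_cayley upper_half_plane_def)

section \<open>Comparison of b_{G,p} with the pseudo-hyperbolic distance\<close>

lemma frontier_unit_disc: "frontier unit_disc = sphere 0 1"
  by (simp add: unit_disc_def)

lemma frontier_upper_half_plane: "frontier upper_half_plane = {x. Im x = 0}"
proof -
  have "upper_half_plane = {x. \<i> \<bullet> x > 0}"
    by (simp add: upper_half_plane_def)
  then show ?thesis
    using frontier_halfspace_gt[of \<i> 0] by simp
qed

lemma norm_1_minus_cnj_mult_unimodular:
  assumes "cmod z = 1"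
  shows "cmod (1 - cnj w * z) = cmod (z - w)"
proof -
  have "z * cnj z = 1"
    using assms by (simp add: complex_norm_square[symmetric])
  then have "1 - cnj w * z = z * cnj (z - w)"
    by (simp add: algebra_simps)
  then show ?thesis
    using assms by (simp only: norm_mult complex_mod_cnj mult_1)
qed

lemma norm_diff_cnj_real:
  assumes "Im x = 0"
  shows "cmod (x - cnj z) = cmod (x - z)"
proof -
  have "x - cnj z = cnj (x - z)"
    using assms by (simp add: complex_eq_iff)
  then show ?thesis
    by (simp only: complex_mod_cnj)
qed

lemma triangle_via_unit_circle:
  assumes "cmod z = 1" "cmod w2 \<le> 1"
  shows "cmod (1 - cnj w2 * w1) \<le> cmod (w1 - z) + cmod (z - w2)"
proof -
  have "1 - cnj w2 * w1 = (1 - cnj w2 * z) + cnj w2 * (z - w1)"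
    by (simp add: algebra_simps)
  then have "cmod (1 - cnj w2 * w1) \<le> cmod (1 - cnj w2 * z) + cmod (cnj w2 * (z - w1))"
    by (metis norm_triangle_ineq)
  also have "cmod (cnj w2 * (z - w1)) \<le> cmod (w1 - z)"
    using assms(2) by (simp add: norm_mult norm_minus_commute mult_left_le_one_le)
  finally show ?thesis
    using norm_1_minus_cnj_mult_unimodular[OF assms(1)] by simp
qed

lemma triangle_via_real_axis:
  assumes "Im x = 0"
  shows "cmod (w1 - cnj w2) \<le> cmod (w1 - x) + cmod (x - w2)"
  using dist_triangle[of w1 "cnj w2" x] norm_diff_cnj_real[OF assms, of w2]
  by (simp add: dist_norm norm_minus_commute)

lemma b_fun_le_pseudo_hyp:
  assumes p: "1 \<le> p" and G: "G \<in> {unit_disc, upper_half_plane}" and "w1 \<in> G" "w2 \<in> G"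
  shows "b_fun G p w1 w2 \<le> 2 powr (1 - real_of_ereal (1 / p)) * pseudo_hyp G w1 w2"
proof -
  obtain A where "0 < A" "pseudo_hyp G w1 w2 = cmod (w1 - w2) / A"
    and A: "\<And>z. z \<in> frontier G \<Longrightarrow> A \<le> cmod (w1 - z) + cmod (z - w2)"
  proof (cases "G = unit_disc")
    case True
    then have "cmod w1 < 1" "cmod w2 < 1"
      using assms by (auto simp: unit_disc_def)
    then have "cmod (cnj w2 * w1) < 1"
      using mult_strict_mono'[of "cmod w2" 1 "cmod w1" 1] by (simp add: norm_mult)
    then have "0 < cmod (1 - cnj w2 * w1)"
      by auto
    then show ?thesis
      using True \<open>cmod w2 < 1\<close> triangle_via_unit_circle
      by (intro that[of "cmod (1 - cnj w2 * w1)"])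
        (auto simp: pseudo_hyp_unit_disc frontier_unit_disc)
  next
    case False
    then have H: "G = upper_half_plane"
      using G by auto
    then have "0 < cmod (w1 - cnj w2)"
      using assms by (auto simp: upper_half_plane_def complex_eq_iff)
    then show ?thesis
      using H assms triangle_via_real_axis
      by (intro that[of "cmod (w1 - cnj w2)"])
        (auto simp: pseudo_hyp_upper_half_plane frontier_upper_half_plane)
  qed
  moreover have "1 \<in> frontier G"
    using G by (auto simp: frontier_unit_disc frontier_upper_half_plane)
  ultimately show ?thesis
    using b_fun_le_triangle_bound[OF p _ _ A] by auto
qed

lemma pseudo_hyp_upper_half_plane_le_b_fun:
  assumes p: "1 \<le> p" and z1: "z1 \<in> upper_half_plane" and z2: "z2 \<in> upper_half_plane"
  shows "pseudo_hyp upper_half_plane z1 z2 \<le> b_fun upper_half_plane p z1 z2"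
proof -
  have pos: "0 < Im z1" "0 < Im z2"
    using z1 z2 by (auto simp: upper_half_plane_def)
  define t where "t = Im z1 / (Im z1 + Im z2)"
  have t: "0 \<le> t" "t \<le> 1"
    using pos by (auto simp: t_def)
  define x where "x = z1 - of_real t * (z1 - cnj z2)"
  have x_real: "Im x = 0"
    using pos by (simp add: x_def t_def field_simps)
  have "z1 - x = of_real t * (z1 - cnj z2)" "x - cnj z2 = of_real (1 - t) * (z1 - cnj z2)"
    by (simp_all add: x_def algebra_simps)
  then have "cmod (z1 - x) + cmod (x - z2)
      = \<bar>t\<bar> * cmod (z1 - cnj z2) + \<bar>1 - t\<bar> * cmod (z1 - cnj z2)"
    by (simp only: norm_mult norm_of_real flip: norm_diff_cnj_real[OF x_real, of z2])
  then have "cmod (z1 - x) + cmod (x - z2) = cmod (z1 - cnj z2)"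
    using t by (simp add: algebra_simps)
  then have "pseudo_hyp upper_half_plane z1 z2
      = cmod (z1 - z2) / (cmod (z1 - x) + cmod (x - z2))"
    using pseudo_hyp_upper_half_plane[OF z1 z2] by simp
  also have "\<dots> \<le> b_fun upper_half_plane p z1 z2"
    using x_real by (intro triangle_ratio_le_b_fun[OF p]) (simp add: frontier_upper_half_plane)
  finally show ?thesis .
qed

lemma exists_unit_circle_triangle_le:
  assumes "cmod z1 < 1" "cmod z2 \<le> cmod z1"
  shows "\<exists>z. cmod z = 1 \<and> cmod (z1 - z) + cmod (z - z2) \<le> 2 * cmod (1 - cnj z2 * z1)"
proof -
  define r where "r = cmod z1"
  define z where "z = (if z1 = 0 then 1 else z1 / of_real r)"
  have z: "cmod z = 1" "z1 = of_real r * z"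
    by (auto simp: z_def r_def norm_divide)
  define u where "u = cnj z2 * z"
  have r: "0 \<le> r" "r < 1" "cmod u \<le> r"
    using assms z(1) by (auto simp: r_def u_def norm_mult)
  have "z1 - z = of_real (r - 1) * z"
    by (simp add: z(2) algebra_simps)
  then have "cmod (z1 - z) = \<bar>r - 1\<bar>"
    using z(1) by (simp only: norm_mult norm_of_real mult_1_right)
  then have dist_z1: "cmod (z1 - z) = 1 - r"
    using r by simp
  have dist_z2: "cmod (z - z2) = cmod (1 - u)"
    using norm_1_minus_cnj_mult_unimodular[OF z(1)] by (simp add: u_def)
  have "1 - u = (1 - of_real r * u) - of_real (1 - r) * u"
    by (simp add: algebra_simps)
  then have upper: "cmod (1 - u) \<le> cmod (1 - of_real r * u) + \<bar>1 - r\<bar> * cmod u"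
    by (metis norm_triangle_ineq4 norm_mult norm_of_real)
  have "1 = (1 - of_real r * u) + of_real r * u"
    by simp
  then have lower: "1 \<le> cmod (1 - of_real r * u) + \<bar>r\<bar> * cmod u"
    by (metis norm_one norm_triangle_ineq norm_mult norm_of_real)
  have "cnj z2 * z1 = of_real r * u"
    by (simp add: u_def z(2))
  then have "cmod (z1 - z) + cmod (z - z2) \<le> 2 * cmod (1 - cnj z2 * z1)"
    using dist_z1 dist_z2 upper lower r by (simp add: algebra_simps)
  then show ?thesis
    using z(1) by blast
qed

lemma pseudo_hyp_unit_disc_le_b_fun:
  assumes p: "1 \<le> p" and z1: "z1 \<in> unit_disc" and z2: "z2 \<in> unit_disc"
  shows "pseudo_hyp unit_disc z1 z2 \<le> 2 * b_fun unit_disc p z1 z2"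
proof -
  have norms: "cmod z1 < 1" "cmod z2 < 1"
    using z1 z2 by (auto simp: unit_disc_def)
  have "cmod (1 - cnj z1 * z2) = cmod (1 - cnj z2 * z1)"
    by (metis complex_cnj_cnj complex_cnj_diff complex_cnj_mult complex_cnj_one
        complex_mod_cnj mult.commute)
  then obtain z where z: "cmod z = 1"
    and sum_le: "cmod (z1 - z) + cmod (z - z2) \<le> 2 * cmod (1 - cnj z2 * z1)"
    using exists_unit_circle_triangle_le[OF norms(1), of z2]
      exists_unit_circle_triangle_le[OF norms(2), of z1]
    by (cases "cmod z2 \<le> cmod z1") (auto simp: norm_minus_commute add.commute)
  have "0 < cmod (z1 - z)"
    using z norms by auto
  then have "0 < cmod (z1 - z) + cmod (z - z2)"
    by (simp add: add_pos_nonneg)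
  moreover from this have "0 < cmod (1 - cnj z2 * z1)"
    using sum_le by linarith
  ultimately have "cmod (z1 - z2) / cmod (1 - cnj z2 * z1)
      \<le> cmod (z1 - z2) / ((cmod (z1 - z) + cmod (z - z2)) / 2)"
    using sum_le by (intro divide_left_mono) auto
  also have "\<dots> = 2 * (cmod (z1 - z2) / (cmod (z1 - z) + cmod (z - z2)))"
    by simp
  also have "\<dots> \<le> 2 * b_fun unit_disc p z1 z2"
    using triangle_ratio_le_b_fun[OF p, of z unit_disc z1 z2] z
    by (simp add: frontier_unit_disc)
  finally show ?thesis
    by (simp add: pseudo_hyp_unit_disc)
qed

lemma pseudo_hyp_le_b_fun:
  assumes "1 \<le> p" "G \<in> {unit_disc, upper_half_plane}" "z1 \<in> G" "z2 \<in> G"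
  shows "pseudo_hyp G z1 z2 \<le> (if G = unit_disc then 2 else 1) * b_fun G p z1 z2"
  using assms pseudo_hyp_unit_disc_le_b_fun pseudo_hyp_upper_half_plane_le_b_fun by auto

lemma mobius_onto_holomorphic:
  assumes "mobius_onto f G \<Omega>"
  shows "f holomorphic_on G"
proof -
  obtain a b c d where f: "\<forall>z\<in>G. c * z + d \<noteq> 0 \<and> f z = (a * z + b) / (c * z + d)"
    using assms unfolding mobius_onto_def by blast
  then have "(\<lambda>z. (a * z + b) / (c * z + d)) holomorphic_on G"
    by (intro holomorphic_intros) auto
  then show ?thesis
    by (rule holomorphic_transform) (use f in auto)
qed

theorem proposition4p5:
  fixes f :: "complex \<Rightarrow> complex" and G \<Omega> :: "complex set" and p :: ereal
  assumes "G \<in> {unit_disc, upper_half_plane}"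
    and "\<Omega> \<in> {unit_disc, upper_half_plane}"
    and "mobius_onto f G \<Omega>"
    and "1 \<le> p"
    and "L = (if G = unit_disc then 2 powr (2 - real_of_ereal (1 / p))
              else 2 powr (1 - real_of_ereal (1 / p)))"
  shows "\<forall>z1\<in>G. \<forall>z2\<in>G. b_fun \<Omega> p (f z1) (f z2) \<le> L * b_fun G p z1 z2"
proof (intro ballI)
  fix z1 z2 assume z: "z1 \<in> G" "z2 \<in> G"
  define c where "c = 2 powr (1 - real_of_ereal (1 / p))"
  have f: "f holomorphic_on G" "f ` G = \<Omega>"
    using assms(3) mobius_onto_holomorphic by (auto simp: mobius_onto_def)
  have L: "L = c * (if G = unit_disc then 2 else 1)"
    using assms(5) powr_add[of 2 1 "1 - real_of_ereal (1 / p)"] by (simp add: c_def)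
  have "b_fun \<Omega> p (f z1) (f z2) \<le> c * pseudo_hyp \<Omega> (f z1) (f z2)"
    using b_fun_le_pseudo_hyp[OF assms(4,2)] f(2) z by (auto simp: c_def)
  also have "\<dots> \<le> c * pseudo_hyp G z1 z2"
    using pseudo_hyp_holomorphic_le[OF assms(1,2) f(1) _ z] f(2)
    by (intro mult_left_mono) (auto simp: c_def)
  also have "\<dots> \<le> L * b_fun G p z1 z2"
    using pseudo_hyp_le_b_fun[OF assms(4,1) z] unfolding L
    by (simp add: c_def mult.assoc mult_left_mono)
  finally show "b_fun \<Omega> p (f z1) (f z2) \<le> L * b_fun G p z1 z2" .
qed

end
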